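(* Let $n\ge1$ and $0\le k<n$. Then: (a) $|\mathbf{I}_{n,k}(001)|=|\mathbf{I}_{n-1}(001)|-\sum_{j<k}|\mathbf{I}_{n-2,j}(001)|$. (b) $|\mathbf{I}_{n,k}(010)|=|\mathbf{I}_{n-1}(010)|-(n-2-k)\,|\mathbf{I}_{n-2,k}(010)|$. (c) For $k<n-1$, $|\mathbf{I}_{n,k}(011)|=|\mathbf{I}_{n-1}(011)|-\sum_{j<k}|\mathbf{I}_{n-2,j}(011)|$, and $|\mathbf{I}_{n,n-1}(011)|=|\mathbf{I}_{n-1}(011)|$. (d) $|\mathbf{I}_{n,k}(101)|=|\mathbf{I}_{n-1}(101)|-k\,|\mathbf{I}_{n-2,k}(101)|$.
   Context: An inversion sequence of length $n$ is an integer sequence $e=e_1\dots e_n$ with $0\le e_i<i$ for all $i$; $\mathbf{I}_n$ denotes the set of these. The reduction of an integer word replaces every occurrence of its $i$-th smallest distinct value by $i-1$. $e$ contains the consecutive pattern $p$ of length 3 if some $e_ie_{i+1}e_{i+2}$ has reduction $p$, and avoids it otherwise; $\mathbf{I}_n(p)$ is the set of $e\in\mathbf{I}_n$ avoiding $p$. $\mathbf{I}_{n,k}(p)=\{e\in\mathbf{I}_n(p):e_n=k\}$, empty for $k\ge n$. Conventions: $|\mathbf{I}_0(p)|=1$ and $|\mathbf{I}_{m,j}(p)|=0$ for $m\le0$; empty sums are $0$. *)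

theory Defs
  imports Main
begin

text \<open>Inversion sequences of length n, as 0-indexed lists: e ! i \<le> i (i.e. 0 \<le> e_{i+1} < i+1).\<close>
definition inv_seqs :: "nat \<Rightarrow> nat list set" where
  "inv_seqs n = {e. length e = n \<and> (\<forall>i<n. e ! i \<le> i)}"

definition reduction :: "nat list \<Rightarrow> nat list" where
  "reduction w = map (\<lambda>x. card {y \<in> set w. y < x}) w"

definition contains_consec :: "nat list \<Rightarrow> nat list \<Rightarrow> bool" where
  "contains_consec e p \<longleftrightarrow>
     (\<exists>i. i + length p \<le> length e \<and> reduction (take (length p) (drop i e)) = p)"

definition avoiders :: "nat \<Rightarrow> nat list \<Rightarrow> nat list set" where
  "avoiders n p = {e \<in> inv_seqs n. \<not> contains_consec e p}"

definition avoiders_last :: "nat \<Rightarrow> nat \<Rightarrow> nat list \<Rightarrow> nat list set" where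
  "avoiders_last n k p = {e \<in> avoiders n p. 0 < n \<and> last e = k}"

end

theory Submission
  imports Defs
begin

text \<open>Appending k to an avoider e of length n - 1 gives an avoider ending in k unless the
  last two entries of e together with k form an occurrence of p, so |I_{n,k}(p)| is
  |I_{n-1}(p)| minus the number of such blocked avoiders. For the four patterns considered,
  two occurrences of p can never overlap in two positions; hence the blocked avoiders are
  exactly the sequences e' @ [x] with e' an avoider of length n - 2, x \<le> n - 2 and
  reduction [last e', x, k] = p, the constraint on x never creating an earlier occurrence.
  Counting the admissible pairs (last e', x) for each pattern gives the four correction terms.\<close>

lemma reduction_length3:
  "reduction [a, b, c] =
     [card ({b, c} \<inter> {..<a}), card ({a, c} \<inter> {..<b}), card ({a, b} \<inter> {..<c})]"
  unfolding reduction_def by (auto intro!: arg_cong[where f = card])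

lemma reduction_eq_pattern_iff:
  fixes a b c :: nat
  shows reduction_eq_001_iff: "reduction [a, b, c] = [0, 0, 1] \<longleftrightarrow> a = b \<and> b < c"
    and reduction_eq_010_iff: "reduction [a, b, c] = [0, 1, 0] \<longleftrightarrow> a = c \<and> a < b"
    and reduction_eq_011_iff: "reduction [a, b, c] = [0, 1, 1] \<longleftrightarrow> b = c \<and> a < b"
    and reduction_eq_101_iff: "reduction [a, b, c] = [1, 0, 1] \<longleftrightarrow> a = c \<and> b < a"
  unfolding reduction_length3
  by ((cases rule: linorder_cases[of a b]; cases rule: linorder_cases[of b c];
      cases rule: linorder_cases[of a c]; auto simp: Int_insert_left)+)

lemma contains_consec_length: "contains_consec e p \<Longrightarrow> length p \<le> length e"
  unfolding contains_consec_def by auto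

lemma contains_consec_append:
  assumes "contains_consec e p"
  shows "contains_consec (e @ xs) p"
proof -
  have "take (length p) (drop i (e @ xs)) = take (length p) (drop i e)"
    if "i + length p \<le> length e" for i
    using that by simp
  then show ?thesis
    using assms unfolding contains_consec_def by (metis length_append trans_le_add1)
qed

lemma contains_consec_snoc:
  "contains_consec (e @ [x]) p \<longleftrightarrow> contains_consec e p \<or>
    (length p \<le> Suc (length e) \<and> reduction (drop (Suc (length e) - length p) (e @ [x])) = p)"
    (is "_ \<longleftrightarrow> _ \<or> ?final")
proof
  assume "contains_consec (e @ [x]) p"
  then obtain i where i: "i + length p \<le> Suc (length e)"
    and red: "reduction (take (length p) (drop i (e @ [x]))) = p"
    unfolding contains_consec_def by auto
  show "contains_consec e p \<or> ?final"
  proof (cases "i + length p \<le> length e")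
    case True
    then have "take (length p) (drop i (e @ [x])) = take (length p) (drop i e)" by simp
    then show ?thesis using True red unfolding contains_consec_def by auto
  next
    case False
    then have "i = Suc (length e) - length p" using i by simp
    then show ?thesis using i red by simp
  qed
next
  assume "contains_consec e p \<or> ?final"
  then show "contains_consec (e @ [x]) p"
  proof
    assume "contains_consec e p"
    then show ?thesis by (rule contains_consec_append)
  next
    assume ?final
    then show ?thesis
      unfolding contains_consec_def
      by (intro exI[of _ "Suc (length e) - length p"]) simp
  qed
qed

lemma inv_seqs_snoc: "e @ [x] \<in> inv_seqs (Suc n) \<longleftrightarrow> e \<in> inv_seqs n \<and> x \<le> n"
  unfolding inv_seqs_def by (auto simp: nth_append less_Suc_eq)

lemma avoiders_snoc:
  "e @ [x] \<in> avoiders (Suc n) p \<longleftrightarrow> e \<in> avoiders n p \<and> x \<le> n \<and>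
     \<not> (length p \<le> Suc n \<and> reduction (drop (Suc n - length p) (e @ [x])) = p)"
  unfolding avoiders_def using contains_consec_snoc[of e x p] inv_seqs_snoc[of e x n]
  by (auto simp: inv_seqs_def)

lemma finite_inv_seqs: "finite (inv_seqs n)"
proof (rule finite_subset)
  show "inv_seqs n \<subseteq> {e. set e \<subseteq> {..n} \<and> length e = n}"
    unfolding inv_seqs_def by (auto simp: in_set_conv_nth) (meson less_imp_le order.trans)
  show "finite {e. set e \<subseteq> {..n} \<and> length e = n}"
    by (rule finite_lists_length_eq) simp
qed

lemma finite_avoiders: "finite (avoiders n p)"
  using finite_inv_seqs unfolding avoiders_def by simp

lemma finite_avoiders_last: "finite (avoiders_last n k p)"
  using finite_avoiders unfolding avoiders_last_def by simp

lemma last_less_if_avoiders: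
  assumes "e \<in> avoiders n p" and "0 < n"
  shows "last e < n"
proof -
  have "length e = n" and "e ! (n - 1) \<le> n - 1"
    using assms unfolding avoiders_def inv_seqs_def by auto
  moreover have "e \<noteq> []" using \<open>length e = n\<close> assms(2) by auto
  ultimately show ?thesis using assms(2) by (simp add: last_conv_nth)
qed

lemma avoiders_last_eq_empty: "n \<le> k \<Longrightarrow> avoiders_last n k p = {}"
  unfolding avoiders_last_def using last_less_if_avoiders by fastforce

definition blocked_avoiders :: "nat \<Rightarrow> nat \<Rightarrow> nat list \<Rightarrow> nat list set" where
  "blocked_avoiders n k p = {e \<in> avoiders n p. contains_consec (e @ [k]) p}"

lemma avoiders_last_Suc:
  assumes "k \<le> n"
  shows "avoiders_last (Suc n) k p = (\<lambda>e. e @ [k]) ` (avoiders n p - blocked_avoiders n k p)"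
proof safe
  fix e assume e: "e \<in> avoiders_last (Suc n) k p"
  then have "e \<noteq> []"
    unfolding avoiders_last_def avoiders_def inv_seqs_def by auto
  then obtain e' where "e = e' @ [k]"
    using e unfolding avoiders_last_def by (metis (mono_tags) append_butlast_last_id mem_Collect_eq)
  moreover have "e' \<in> avoiders n p - blocked_avoiders n k p"
    using e contains_consec_append[of e' p "[k]"] \<open>e = e' @ [k]\<close>
    unfolding avoiders_last_def blocked_avoiders_def avoiders_def
    by (auto simp: inv_seqs_snoc)
  ultimately show "e \<in> (\<lambda>e. e @ [k]) ` (avoiders n p - blocked_avoiders n k p)"
    by blast
next
  fix e assume "e \<in> avoiders n p" and "e \<notin> blocked_avoiders n k p"
  with assms show "e @ [k] \<in> avoiders_last (Suc n) k p"
    unfolding avoiders_last_def blocked_avoiders_def avoiders_def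
    by (auto simp: inv_seqs_snoc)
qed

lemma card_avoiders_last_Suc:
  assumes "k \<le> n"
  shows "int (card (avoiders_last (Suc n) k p)) =
    int (card (avoiders n p)) - int (card (blocked_avoiders n k p))"
proof -
  have blocked_subset: "blocked_avoiders n k p \<subseteq> avoiders n p"
    unfolding blocked_avoiders_def by blast
  have "card (avoiders_last (Suc n) k p) = card (avoiders n p - blocked_avoiders n k p)"
    unfolding avoiders_last_Suc[OF assms] by (rule card_image) (auto simp: inj_on_def)
  also have "\<dots> = card (avoiders n p) - card (blocked_avoiders n k p)"
    using finite_subset[OF blocked_subset finite_avoiders] blocked_subset by (rule card_Diff_subset)
  finally show ?thesis
    using card_mono[OF finite_avoiders blocked_subset] by simp
qed

definition self_overlapping :: "nat list \<Rightarrow> bool" where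
  "self_overlapping p \<longleftrightarrow> (\<exists>a b c d. reduction [a, b, c] = p \<and> reduction [b, c, d] = p)"

definition blocking_pairs :: "nat \<Rightarrow> nat \<Rightarrow> nat list \<Rightarrow> (nat \<times> nat list) set" where
  "blocking_pairs n k p =
     {(x, e). e \<in> avoiders n p \<and> 0 < n \<and> x \<le> n \<and> reduction [last e, x, k] = p}"

lemma drop_snoc_last3:
  assumes "2 \<le> length w"
  shows "drop (Suc (length w) - 3) (w @ [y]) = [w ! (length w - 2), last w, y]"
proof -
  obtain v b where w: "w = v @ [b]"
    using assms by (cases w rule: rev_exhaust) auto
  moreover obtain u a where "v = u @ [a]"
    using assms w by (cases v rule: rev_exhaust) auto
  ultimately show ?thesis by (simp add: nth_append)
qed

lemma snoc_mem_blocked_avoiders_Suc_iff: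
  assumes p: "length p = 3" "\<not> self_overlapping p" and e: "length e = m"
  shows "e @ [x] \<in> blocked_avoiders (Suc m) k p \<longleftrightarrow> (x, e) \<in> blocking_pairs m k p"
proof -
  have window_k: "drop (Suc (length (e @ [x])) - length p) ((e @ [x]) @ [k]) = [last e, x, k]"
    if "0 < m"
  proof -
    have "e \<noteq> []" using that e by auto
    then show ?thesis
      using drop_snoc_last3[of "e @ [x]" k] that p e by (simp add: nth_append last_conv_nth)
  qed
  have blocked_iff: "contains_consec ((e @ [x]) @ [k]) p \<longleftrightarrow>
      contains_consec (e @ [x]) p \<or> (0 < m \<and> reduction [last e, x, k] = p)"
  proof (cases "0 < m")
    case True
    then show ?thesis
      using contains_consec_snoc[of "e @ [x]" k p, unfolded window_k[OF True]] p e by simp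
  next
    case False
    then show ?thesis
      using contains_consec_length[of "(e @ [x]) @ [k]" p] contains_consec_length[of "e @ [x]" p] p e
      by auto
  qed
  have no_occurrence_at_x:
    "\<not> (length p \<le> Suc m \<and> reduction (drop (Suc m - length p) (e @ [x])) = p)"
    if "reduction [last e, x, k] = p"
    using drop_snoc_last3[of e x] that p e unfolding self_overlapping_def by auto
  show ?thesis
    unfolding blocked_avoiders_def blocking_pairs_def
    using avoiders_snoc[of e x m p] no_occurrence_at_x blocked_iff
    by (auto simp: avoiders_def)
qed

lemma blocked_avoiders_Suc:
  assumes "length p = 3" and "\<not> self_overlapping p"
  shows "blocked_avoiders (Suc m) k p = (\<lambda>(x, e). e @ [x]) ` blocking_pairs m k p"
proof (intro set_eqI iffI)
  fix w assume w: "w \<in> blocked_avoiders (Suc m) k p"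
  then have "length w = Suc m"
    unfolding blocked_avoiders_def avoiders_def inv_seqs_def by auto
  then obtain e x where "w = e @ [x]" and "length e = m"
    by (cases w rule: rev_exhaust) auto
  with w show "w \<in> (\<lambda>(x, e). e @ [x]) ` blocking_pairs m k p"
    using snoc_mem_blocked_avoiders_Suc_iff[OF assms] by force
next
  fix w assume "w \<in> (\<lambda>(x, e). e @ [x]) ` blocking_pairs m k p"
  then obtain e x where "w = e @ [x]" and pair: "(x, e) \<in> blocking_pairs m k p"
    by auto
  moreover have "length e = m"
    using pair unfolding blocking_pairs_def avoiders_def inv_seqs_def by auto
  ultimately show "w \<in> blocked_avoiders (Suc m) k p"
    using snoc_mem_blocked_avoiders_Suc_iff[OF assms] by simp
qed

lemma card_blocked_avoiders:
  assumes "length p = 3" and "\<not> self_overlapping p"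
  shows "card (blocked_avoiders n k p) = card (blocking_pairs (n - 1) k p)"
proof (cases n)
  case 0
  have "blocked_avoiders 0 k p = {}"
    using contains_consec_length[of "[] @ [k]" p] assms(1)
    unfolding blocked_avoiders_def avoiders_def inv_seqs_def by auto
  moreover have "blocking_pairs 0 k p = {}"
    unfolding blocking_pairs_def by simp
  ultimately show ?thesis using 0 by simp
next
  case (Suc m)
  have "inj_on (\<lambda>(x, e). e @ [x]) (blocking_pairs m k p)"
    by (auto simp: inj_on_def)
  then show ?thesis
    using Suc blocked_avoiders_Suc[OF assms] by (simp add: card_image)
qed

lemma not_self_overlapping:
  "\<not> self_overlapping [0, 0, 1]" "\<not> self_overlapping [0, 1, 0]"
  "\<not> self_overlapping [0, 1, 1]" "\<not> self_overlapping [1, 0, 1]"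
  unfolding self_overlapping_def reduction_eq_pattern_iff by auto

lemma blocking_pairs_001:
  "blocking_pairs m k [0, 0, 1] = Sigma {..<k} (\<lambda>x. avoiders_last m x [0, 0, 1])"
  unfolding blocking_pairs_def avoiders_last_def reduction_eq_001_iff
  by (auto dest: last_less_if_avoiders)

lemma blocking_pairs_010:
  "blocking_pairs m k [0, 1, 0] = {k<..m} \<times> avoiders_last m k [0, 1, 0]"
  unfolding blocking_pairs_def avoiders_last_def reduction_eq_010_iff by auto

lemma blocking_pairs_011:
  "blocking_pairs m k [0, 1, 1] = ({k} \<inter> {..m}) \<times> (\<Union>j<k. avoiders_last m j [0, 1, 1])"
  unfolding blocking_pairs_def avoiders_last_def reduction_eq_011_iff by auto

lemma blocking_pairs_101:
  "blocking_pairs m k [1, 0, 1] = {..<k} \<times> avoiders_last m k [1, 0, 1]"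
  unfolding blocking_pairs_def avoiders_last_def reduction_eq_101_iff
  by (auto dest: last_less_if_avoiders)

lemma card_blocked_avoiders_001:
  "card (blocked_avoiders n k [0, 0, 1]) = (\<Sum>j<k. card (avoiders_last (n - 1) j [0, 0, 1]))"
proof -
  have "card (blocked_avoiders n k [0, 0, 1]) = card (blocking_pairs (n - 1) k [0, 0, 1])"
    by (rule card_blocked_avoiders[OF _ not_self_overlapping(1)]) simp
  then show ?thesis
    unfolding blocking_pairs_001 by (simp add: card_SigmaI finite_avoiders_last)
qed

lemma card_blocked_avoiders_010:
  "int (card (blocked_avoiders n k [0, 1, 0])) =
     (int n - 1 - int k) * int (card (avoiders_last (n - 1) k [0, 1, 0]))"
proof -
  have "card (blocked_avoiders n k [0, 1, 0]) = card (blocking_pairs (n - 1) k [0, 1, 0])"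
    by (rule card_blocked_avoiders[OF _ not_self_overlapping(2)]) simp
  then have blocked: "card (blocked_avoiders n k [0, 1, 0]) =
      (n - 1 - k) * card (avoiders_last (n - 1) k [0, 1, 0])"
    unfolding blocking_pairs_010 by (simp add: card_cartesian_product)
  show ?thesis
  proof (cases "k < n - 1")
    case True
    then show ?thesis using blocked by (simp add: of_nat_diff)
  next
    case False
    then show ?thesis using blocked by (simp add: avoiders_last_eq_empty)
  qed
qed

lemma card_blocked_avoiders_011:
  "card (blocked_avoiders n k [0, 1, 1]) =
     (if k < n then \<Sum>j<k. card (avoiders_last (n - 1) j [0, 1, 1]) else 0)"
proof -
  have "card (blocked_avoiders n k [0, 1, 1]) = card (blocking_pairs (n - 1) k [0, 1, 1])"
    by (rule card_blocked_avoiders[OF _ not_self_overlapping(3)]) simp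
  moreover have "card (\<Union>j<k. avoiders_last (n - 1) j [0, 1, 1]) =
      (\<Sum>j<k. card (avoiders_last (n - 1) j [0, 1, 1]))"
    by (intro card_UN_disjoint finite_lessThan ballI finite_avoiders_last)
      (auto simp: avoiders_last_def)
  ultimately show ?thesis
    unfolding blocking_pairs_011 by (auto simp: card_cartesian_product avoiders_last_def)
qed

lemma card_blocked_avoiders_101:
  "card (blocked_avoiders n k [1, 0, 1]) = k * card (avoiders_last (n - 1) k [1, 0, 1])"
proof -
  have "card (blocked_avoiders n k [1, 0, 1]) = card (blocking_pairs (n - 1) k [1, 0, 1])"
    by (rule card_blocked_avoiders[OF _ not_self_overlapping(4)]) simp
  then show ?thesis
    unfolding blocking_pairs_101 by (simp add: card_cartesian_product)
qed

theorem mainTheorem16: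
  fixes n k :: nat
  assumes "1 \<le> n" and "k < n"
  shows
    "(int (card (avoiders_last n k [0,0,1])) =
       int (card (avoiders (n - 1) [0,0,1])) - (\<Sum>j<k. int (card (avoiders_last (n - 2) j [0,0,1]))))
  \<and>
    (int (card (avoiders_last n k [0,1,0])) =
       int (card (avoiders (n - 1) [0,1,0])) - (int n - 2 - int k) * int (card (avoiders_last (n - 2) k [0,1,0])))
  \<and>
    (k < n - 1 \<longrightarrow> int (card (avoiders_last n k [0,1,1])) =
       int (card (avoiders (n - 1) [0,1,1])) - (\<Sum>j<k. int (card (avoiders_last (n - 2) j [0,1,1]))))
  \<and>
    (card (avoiders_last n (n - 1) [0,1,1]) = card (avoiders (n - 1) [0,1,1]))
  \<and>
    (int (card (avoiders_last n k [1,0,1])) =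
       int (card (avoiders (n - 1) [1,0,1])) - int k * int (card (avoiders_last (n - 2) k [1,0,1])))"
proof -
  obtain m where n: "n = Suc m" and "k \<le> m"
    using assms by (cases n) auto
  then have "n - 1 = m" and "n - 2 = m - 1" and "int n - 2 = int m - 1"
    by auto
  moreover note card_avoiders_last_Suc[OF \<open>k \<le> m\<close>]
  moreover have "card (avoiders_last n m [0, 1, 1]) = card (avoiders m [0, 1, 1])"
    using card_avoiders_last_Suc[of m m "[0, 1, 1]"] card_blocked_avoiders_011[of m m] n by simp
  ultimately show ?thesis
    using card_blocked_avoiders_001[of m k] card_blocked_avoiders_010[of m k]
      card_blocked_avoiders_011[of m k] card_blocked_avoiders_101[of m k]
    by (simp add: n of_nat_sum)
qed

end
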